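(* (a) For $n\ge1$, the Schröder number $r_{n-1}$ equals the number of triples consisting of an integer $s\ge0$ together with integer sequences $i_1\ge i_2\ge\dots\ge i_s>0$ and $0<j_1\le j_2\le\dots\le j_s$ and a sequence $r_1,\dots,r_s\in\{0,1\}$ such that $i_1-r_1>i_2-r_2>\dots>i_s-r_s>0$, $0<j_1-r_1<j_2-r_2<\dots<j_s-r_s$, and $i_k+j_k\le n+r_k$ for all $k=1,\dots,s$. (b) For $n\ge1$, the Catalan number $C_n=\frac{1}{n+1}\binom{2n}{n}$ equals the number of pairs of integer sequences $i_1>i_2>\dots>i_s>0$ and $0<j_1<j_2<\dots<j_s$ (with $s\ge0$ arbitrary) such that $i_k+j_k\le n$ for all $k$. Moreover, for each $s\ge0$ the number of such pairs of sequences of length $s$ equals the Narayana number $N(n,s+1)=\frac1n\binom{n}{s}\binom{n}{s+1}$.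
   Context: The (large) Schröder numbers are defined by $r_0=1$ and $r_n=r_{n-1}+\sum_{i=0}^{n-1}r_ir_{n-1-i}$ for $n\ge1$. *)

theory Defs
  imports Complex_Main
begin

function schroeder :: "nat \<Rightarrow> nat" where
  "schroeder 0 = 1"
| "schroeder (Suc n) = schroeder n + (\<Sum>i\<le>n. schroeder i * schroeder (n - i))"
  by pat_completeness auto
termination by (relation "measure id") auto

text \<open>Triples of part (a): sequences i_1..i_s, j_1..j_s, r_1..r_s (as lists of length s,
  0-based indices).\<close>
definition schroeder_triple :: "nat \<Rightarrow> int list \<Rightarrow> int list \<Rightarrow> int list \<Rightarrow> bool" where
  "schroeder_triple n is js rs \<longleftrightarrow>
     length js = length is \<and> length rs = length is \<and>
     (\<forall>k. Suc k < length is \<longrightarrow> is ! k \<ge> is ! Suc k) \<and>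
     (\<forall>k < length is. is ! k > 0) \<and>
     (\<forall>k < length is. js ! k > 0) \<and>
     (\<forall>k. Suc k < length is \<longrightarrow> js ! k \<le> js ! Suc k) \<and>
     (\<forall>k < length is. rs ! k \<in> {0, 1}) \<and>
     (\<forall>k. Suc k < length is \<longrightarrow> is ! k - rs ! k > is ! Suc k - rs ! Suc k) \<and>
     (\<forall>k < length is. is ! k - rs ! k > 0) \<and>
     (\<forall>k < length is. js ! k - rs ! k > 0) \<and>
     (\<forall>k. Suc k < length is \<longrightarrow> js ! k - rs ! k < js ! Suc k - rs ! Suc k) \<and>
     (\<forall>k < length is. is ! k + js ! k \<le> int n + rs ! k)"

definition catalan_pair :: "nat \<Rightarrow> int list \<Rightarrow> int list \<Rightarrow> bool" where
  "catalan_pair n is js \<longleftrightarrow>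
     length js = length is \<and>
     (\<forall>k. Suc k < length is \<longrightarrow> is ! k > is ! Suc k) \<and>
     (\<forall>k < length is. is ! k > 0) \<and>
     (\<forall>k < length is. js ! k > 0) \<and>
     (\<forall>k. Suc k < length is \<longrightarrow> js ! k < js ! Suc k) \<and>
     (\<forall>k < length is. is ! k + js ! k \<le> int n)"

end

theory Submission
  imports Defs "HOL-Computational_Algebra.Formal_Power_Series"
begin

(* With m = n - 1, the substitution i_k = x_k + 1 + r_k, j_k = m - y_k + r_k turns the triples
   of part (a) into strictly decreasing sequences x, y of equal length with entries in {0..<m} and
   labels r_k in {0, 1} such that x_k + r_k <= y_k; with all labels 0 these are the pairs of
   part (b).  Allowing x to be h entries longer than y (entry k of y then bounds entry k + h of x)
   and deciding whether the largest value enters x, y, both or neither gives a recursion in m.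
   For labels in {0, 1} it is solved by the coefficients of S (S - 1)^h, where the Schroeder
   series S satisfies S = 1 + X (S + S^2).  For zero labels and y of length s it is solved by
   the binomial determinant C(m, s+h) C(m, s) - C(m, s+h+1) C(m, s-1), which for h = 0 is the
   Narayana number; Vandermonde's identity sums these to the Catalan number. *)

type_synonym seq_triple = "int list \<times> int list \<times> int list"

lemma list_all2_drop_Cons2:
  "list_all2 P (drop h zs) (y # ys) \<longleftrightarrow>
     h < length zs \<and> P (zs ! h) y \<and> list_all2 P (drop (Suc h) zs) ys"
proof (cases "h < length zs")
  case True
  then show ?thesis by (subst Cons_nth_drop_Suc[symmetric]) auto
qed simp

lemma sum_UN_injective_images:
  assumes "finite S" "finite A" "\<And>r. r \<in> S \<Longrightarrow> inj_on (f r) A"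
    and "\<And>r r'. r \<in> S \<Longrightarrow> r' \<in> S \<Longrightarrow> r \<noteq> r' \<Longrightarrow> f r ` A \<inter> f r' ` A = {}"
  shows "sum g (\<Union>r\<in>S. f r ` A) = (\<Sum>r\<in>S. sum (g \<circ> f r) A)"
proof -
  have "sum g (\<Union>r\<in>S. f r ` A) = (\<Sum>r\<in>S. sum g (f r ` A))"
    using assms by (intro sum.UNION_disjoint) auto
  also have "\<dots> = (\<Sum>r\<in>S. sum (g \<circ> f r) A)"
    using assms(3) by (intro sum.cong refl sum.reindex) auto
  finally show ?thesis .
qed

lemma int_card_filter_eq_sum:
  "finite A \<Longrightarrow> int (card {x \<in> A. P x}) = (\<Sum>x\<in>A. if P x then 1 else 0)"
  using sum.inter_filter[of A "\<lambda>_. 1 :: int" P] by simp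

lemma length_le_if_sorted_below:
  assumes "sorted_wrt (>) ys" "set ys \<subseteq> {0..<int m}"
  shows "length ys \<le> m"
proof -
  have "distinct ys"
    using assms(1) by (induction ys) auto
  then have "length ys = card (set ys)"
    by (simp add: distinct_card)
  also have "\<dots> \<le> card {0..<int m}"
    using assms(2) by (intro card_mono) auto
  finally show ?thesis by simp
qed

lemma Suc_mult_choose_Suc: "Suc k * (n choose Suc k) = (n - k) * (n choose k)"
  using binomial_absorption[of k n] binomial_absorb_comp[of n k] by simp

lemma choose_Suc_ratio:
  "(real k + 1) * real (m choose Suc k) = (real m - real k) * real (m choose k)"
proof (cases "k \<le> m")
  case True
  have "real (Suc k * (m choose Suc k)) = real ((m - k) * (m choose k))"
    by (simp only: Suc_mult_choose_Suc)
  then show ?thesis using True by (simp add: of_nat_diff algebra_simps)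
qed (simp add: binomial_eq_0)

lemma narayana_identity:
  "real (Suc m) * (real (m choose Suc t) ^ 2 - real (m choose Suc (Suc t)) * real (m choose t)) =
     real (Suc m choose Suc t) * real (Suc m choose Suc (Suc t))"
proof (cases "t < m")
  case True
  define a b c where "a = real (m choose t)" and "b = real (m choose Suc t)"
    and "c = real (m choose Suc (Suc t))"
  have "(real t + 1) * b = (real m - real t) * a" "(real t + 2) * c = (real m - real t - 1) * b"
    unfolding a_def b_def c_def using choose_Suc_ratio[of t m] choose_Suc_ratio[of "Suc t" m]
    by (simp_all add: algebra_simps)
  then have "(real m - real t) * (real t + 2) * ((real m + 1) * (b ^ 2 - c * a)) =
        (real m - real t) * (real t + 2) * ((a + b) * (b + c))"
    by algebra
  moreover have "(real m - real t) * (real t + 2) \<noteq> 0"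
    using True by simp
  ultimately show ?thesis by (simp add: a_def b_def c_def add.commute)
qed (simp add: binomial_eq_0)

lemma sum_choose_mult_choose_Suc:
  "(\<Sum>s\<le>m. real (Suc m choose s) * real (Suc m choose Suc s)) = real ((2 * Suc m) choose m)"
proof -
  have "(\<Sum>s\<le>m. (Suc m choose s) * (Suc m choose Suc s))
      = (\<Sum>s\<le>m. (Suc m choose s) * (Suc m choose (m - s)))"
    by (intro sum.cong refl) (auto simp: binomial_symmetric[of "m - _" "Suc m"] Suc_diff_le)
  also have "\<dots> = (Suc m + Suc m) choose m"
    by (rule vandermonde)
  finally have "(\<Sum>s\<le>m. (Suc m choose s) * (Suc m choose Suc s)) = (2 * Suc m) choose m"
    by (simp only: mult_2)
  then show ?thesis
    by (simp only: of_nat_sum [symmetric] of_nat_mult [symmetric])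
qed

lemma choose_pred_div_eq_catalan:
  "real ((2 * Suc m) choose m) / real (Suc m)
     = 1 / (real (Suc m) + 1) * real ((2 * Suc m) choose Suc m)"
proof -
  have "Suc m * ((2 * Suc m) choose Suc m) = (Suc m + 1) * ((2 * Suc m) choose m)"
    using Suc_mult_choose_Suc[of m "2 * Suc m"] by simp
  then have "real (Suc m) * real ((2 * Suc m) choose Suc m)
      = (real (Suc m) + 1) * real ((2 * Suc m) choose m)"
    by (metis of_nat_1 of_nat_add of_nat_mult)
  then show ?thesis
    by (simp add: field_simps)
qed

section \<open>Dominated triples and the recursion on the largest entry\<close>

definition dominated_triples :: "int set \<Rightarrow> nat \<Rightarrow> nat \<Rightarrow> seq_triple set" where
  "dominated_triples R m h = {(xs, ys, rs).
     length xs = length ys + h \<and> length rs = length xs \<and>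
     sorted_wrt (>) xs \<and> sorted_wrt (>) ys \<and>
     set xs \<subseteq> {0..<int m} \<and> set ys \<subseteq> {0..<int m} \<and> set rs \<subseteq> R \<and>
     list_all2 (\<lambda>(x, r) y. x + r \<le> y) (drop h (zip xs rs)) ys}"

definition push_x :: "nat \<Rightarrow> int \<Rightarrow> seq_triple \<Rightarrow> seq_triple" where
  "push_x m r = (\<lambda>(xs, ys, rs). (int m # xs, ys, r # rs))"

definition push_y :: "nat \<Rightarrow> seq_triple \<Rightarrow> seq_triple" where
  "push_y m = (\<lambda>(xs, ys, rs). (xs, int m # ys, rs))"

definition push_xy :: "nat \<Rightarrow> int \<Rightarrow> seq_triple \<Rightarrow> seq_triple" where
  "push_xy m r = (\<lambda>(xs, ys, rs). (int m # xs, int m # ys, r # rs))"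

lemma dominated_triples_0: "dominated_triples R 0 h = (if h = 0 then {([], [], [])} else {})"
  by (auto simp: dominated_triples_def)

lemma dominated_triples_mono: "dominated_triples R m h \<subseteq> dominated_triples R (Suc m) h"
  by (auto simp: dominated_triples_def)

lemma top_notin_dominated_triples:
  "(xs, ys, rs) \<in> dominated_triples R m h \<Longrightarrow> int m \<notin> set xs \<and> int m \<notin> set ys"
  by (auto simp: dominated_triples_def)

lemma dominates_Cons_top:
  assumes "R \<subseteq> {0, 1}" and "(xs, ys, rs) \<in> dominated_triples R m (Suc h)"
  shows "list_all2 (\<lambda>(x, r) y. x + r \<le> y) (drop h (zip xs rs)) (int m # ys)"
proof -
  from assms(2) have len: "h < length xs" "h < length rs" "set xs \<subseteq> {0..<int m}" "set rs \<subseteq> R"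
    by (auto simp: dominated_triples_def)
  then have "xs ! h < int m" "rs ! h \<le> 1"
    using assms(1) nth_mem by fastforce+
  then show ?thesis
    using assms(2) len by (simp add: list_all2_drop_Cons2 dominated_triples_def)
qed

lemma subset_below_Suc: "set xs \<subseteq> {0..<int m} \<Longrightarrow> set xs \<subseteq> {0..<int (Suc m)}"
  by auto

lemma Cons_top_sorted_below:
  assumes "sorted_wrt (>) xs" "set xs \<subseteq> {0..<int m}"
  shows "sorted_wrt (>) (int m # xs)" "set (int m # xs) \<subseteq> {0..<int (Suc m)}"
  using assms by fastforce+

lemma push_x_mem:
  assumes "r \<in> R" "p \<in> dominated_triples R m h"
  shows "push_x m r p \<in> dominated_triples R (Suc m) (Suc h)"
proof -
  obtain xs ys rs where p: "p = (xs, ys, rs)" by (cases p)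
  show ?thesis
    using assms Cons_top_sorted_below[of xs m] subset_below_Suc[of ys m] unfolding p
    by (simp add: dominated_triples_def push_x_def)
qed

lemma push_y_mem:
  assumes "R \<subseteq> {0, 1}" "p \<in> dominated_triples R m (Suc h)"
  shows "push_y m p \<in> dominated_triples R (Suc m) h"
proof -
  obtain xs ys rs where p: "p = (xs, ys, rs)" by (cases p)
  show ?thesis
    using assms dominates_Cons_top[OF assms(1)] Cons_top_sorted_below[of ys m]
      subset_below_Suc[of xs m]
    unfolding p
    by (simp add: dominated_triples_def push_y_def)
qed

(* For h = 0 the two new entries m are compared with each other, which forces label 0. *)
lemma push_xy_mem:
  assumes "R \<subseteq> {0, 1}" "r \<in> R" "h = 0 \<Longrightarrow> r = 0" "p \<in> dominated_triples R m h"
  shows "push_xy m r p \<in> dominated_triples R (Suc m) h"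
proof -
  obtain xs ys rs where p: "p = (xs, ys, rs)" by (cases p)
  have "list_all2 (\<lambda>(x, r) y. x + r \<le> y) (drop h (zip (int m # xs) (r # rs))) (int m # ys)"
  proof (cases h)
    case 0
    then show ?thesis using assms unfolding p by (simp add: dominated_triples_def)
  next
    case (Suc h')
    then show ?thesis using dominates_Cons_top[OF assms(1)] assms(4) unfolding p by simp
  qed
  then show ?thesis
    using assms Cons_top_sorted_below[of xs m] Cons_top_sorted_below[of ys m] unfolding p
    by (simp add: dominated_triples_def push_xy_def)
qed

lemma sorted_below_Suc_cases:
  assumes "sorted_wrt (>) xs" "set xs \<subseteq> {0..<int (Suc m)}"
  obtains "set xs \<subseteq> {0..<int m}"
    | xs' where "xs = int m # xs'" "set xs' \<subseteq> {0..<int m}"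
proof (cases xs)
  case (Cons x xs')
  then show ?thesis
    using assms that by (cases "x = int m") fastforce+
qed (use that in simp)

lemma push_x_memD:
  assumes "R \<subseteq> {0, 1}" "push_x m r (xs, ys, rs) \<in> dominated_triples R (Suc m) h"
    and "set xs \<subseteq> {0..<int m}" "set ys \<subseteq> {0..<int m}"
  shows "h \<noteq> 0 \<and> r \<in> R \<and> (xs, ys, rs) \<in> dominated_triples R m (h - 1)"
proof -
  have r: "r \<in> R" "0 \<le> r"
    using assms(1,2) by (auto simp: dominated_triples_def push_x_def)
  have "h \<noteq> 0"
  proof
    assume "h = 0"
    then obtain y ys' where "ys = y # ys'" "int m + r \<le> y"
      using assms(2) by (cases ys) (auto simp: dominated_triples_def push_x_def)
    then show False using assms(4) r by auto
  qed
  then show ?thesis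
    using assms(2-4) r by (cases h) (auto simp: dominated_triples_def push_x_def)
qed

lemma push_y_memD:
  assumes "push_y m (xs, ys, rs) \<in> dominated_triples R (Suc m) h"
    and "set xs \<subseteq> {0..<int m}" "set ys \<subseteq> {0..<int m}"
  shows "(xs, ys, rs) \<in> dominated_triples R m (Suc h)"
  using assms by (simp add: dominated_triples_def push_y_def list_all2_drop_Cons2)

lemma push_xy_memD:
  assumes "R \<subseteq> {0, 1}" "push_xy m r (xs, ys, rs) \<in> dominated_triples R (Suc m) h"
    and "set xs \<subseteq> {0..<int m}" "set ys \<subseteq> {0..<int m}"
  shows "r \<in> R \<and> (h = 0 \<longrightarrow> r = 0) \<and> (xs, ys, rs) \<in> dominated_triples R m h"
proof (cases h)
  case 0
  then show ?thesis using assms by (auto simp: dominated_triples_def push_xy_def)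
next
  case (Suc h')
  then show ?thesis
    using assms by (simp add: dominated_triples_def push_xy_def list_all2_drop_Cons2)
qed

lemma dominated_triples_Suc_subset:
  assumes "R \<subseteq> {0, 1}"
  shows "dominated_triples R (Suc m) h \<subseteq>
     dominated_triples R m h
     \<union> (if h = 0 then {} else \<Union>r\<in>R. push_x m r ` dominated_triples R m (h - 1))
     \<union> push_y m ` dominated_triples R m (Suc h)
     \<union> (\<Union>r\<in>{r \<in> R. h = 0 \<longrightarrow> r = 0}. push_xy m r ` dominated_triples R m h)"
    (is "_ \<subseteq> ?rhs")
proof
  fix p assume p: "p \<in> dominated_triples R (Suc m) h"
  then obtain xs ys rs where p_eq: "p = (xs, ys, rs)"
    and sorted: "sorted_wrt (>) xs" "sorted_wrt (>) ys"
    and bounds: "set xs \<subseteq> {0..<int (Suc m)}" "set ys \<subseteq> {0..<int (Suc m)}"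
    and len: "length rs = length xs"
    by (auto simp: dominated_triples_def)
  show "p \<in> ?rhs"
  proof (cases rule: sorted_below_Suc_cases[OF sorted(1) bounds(1)])
    case xs_below: 1
    show ?thesis
    proof (cases rule: sorted_below_Suc_cases[OF sorted(2) bounds(2)])
      case 1
      then have "p \<in> dominated_triples R m h"
        using p p_eq xs_below by (simp add: dominated_triples_def)
      then show ?thesis by blast
    next
      case (2 ys')
      then have "p = push_y m (xs, ys', rs)"
        using p_eq by (simp add: push_y_def)
      moreover have "(xs, ys', rs) \<in> dominated_triples R m (Suc h)"
        using push_y_memD p xs_below 2 unfolding calculation by blast
      ultimately show ?thesis by blast
    qed
  next
    case (2 xs')
    then obtain r rs' where p_push: "p = push_x m r (xs', ys, rs')"
      using p_eq len by (cases rs) (auto simp: push_x_def)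
    show ?thesis
    proof (cases rule: sorted_below_Suc_cases[OF sorted(2) bounds(2)])
      case 1
      then have "h \<noteq> 0 \<and> r \<in> R \<and> (xs', ys, rs') \<in> dominated_triples R m (h - 1)"
        using push_x_memD[OF assms] p 2 unfolding p_push by blast
      then show ?thesis
        using p_push by auto
    next
      case (2 ys')
      then have "p = push_xy m r (xs', ys', rs')"
        using p_push by (simp add: push_x_def push_xy_def)
      moreover have "r \<in> R \<and> (h = 0 \<longrightarrow> r = 0) \<and> (xs', ys', rs') \<in> dominated_triples R m h"
        using push_xy_memD[OF assms] p \<open>set xs' \<subseteq> _\<close> 2 unfolding calculation by blast
      ultimately show ?thesis by blast
    qed
  qed
qed

lemma dominated_triples_Suc:
  assumes "R \<subseteq> {0, 1}"
  shows "dominated_triples R (Suc m) h =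
     dominated_triples R m h
     \<union> (if h = 0 then {} else \<Union>r\<in>R. push_x m r ` dominated_triples R m (h - 1))
     \<union> push_y m ` dominated_triples R m (Suc h)
     \<union> (\<Union>r\<in>{r \<in> R. h = 0 \<longrightarrow> r = 0}. push_xy m r ` dominated_triples R m h)"
    (is "_ = ?rhs")
proof (rule equalityI[OF dominated_triples_Suc_subset[OF assms]])
  have "(if h = 0 then {} else \<Union>r\<in>R. push_x m r ` dominated_triples R m (h - 1))
      \<subseteq> dominated_triples R (Suc m) h"
    by (cases h) (auto intro: push_x_mem)
  moreover have "push_y m ` dominated_triples R m (Suc h) \<subseteq> dominated_triples R (Suc m) h"
    using push_y_mem[OF assms] by (rule image_subsetI)
  moreover have "(\<Union>r\<in>{r \<in> R. h = 0 \<longrightarrow> r = 0}. push_xy m r ` dominated_triples R m h)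
      \<subseteq> dominated_triples R (Suc m) h"
    using push_xy_mem[OF assms] by (auto intro!: UN_least image_subsetI)
  ultimately show "?rhs \<subseteq> dominated_triples R (Suc m) h"
    using dominated_triples_mono by (intro Un_least)
qed

lemma finite_dominated_triples:
  assumes "R \<subseteq> {0, 1}"
  shows "finite (dominated_triples R m h)"
proof (induction m arbitrary: h)
  case 0
  then show ?case by (simp add: dominated_triples_0)
next
  case (Suc m)
  have "finite R" using assms finite_subset by blast
  then show ?case using Suc by (simp add: dominated_triples_Suc[OF assms])
qed

lemma sum_dominated_triples_Suc:
  assumes R: "R \<subseteq> {0, 1}"
  shows "sum g (dominated_triples R (Suc m) h) =
     sum g (dominated_triples R m h)
     + (if h = 0 then 0 else \<Sum>r\<in>R. sum (g \<circ> push_x m r) (dominated_triples R m (h - 1)))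
     + sum (g \<circ> push_y m) (dominated_triples R m (Suc h))
     + (\<Sum>r\<in>{r \<in> R. h = 0 \<longrightarrow> r = 0}. sum (g \<circ> push_xy m r) (dominated_triples R m h))"
proof -
  have fin: "finite R" "\<And>h. finite (dominated_triples R m h)"
    using R finite_subset finite_dominated_triples by blast+
  let ?A = "dominated_triples R m h"
  let ?B = "if h = 0 then {} else \<Union>r\<in>R. push_x m r ` dominated_triples R m (h - 1)"
  let ?C = "push_y m ` dominated_triples R m (Suc h)"
  let ?D = "\<Union>r\<in>{r \<in> R. h = 0 \<longrightarrow> r = 0}. push_xy m r ` dominated_triples R m h"
  have disjoint: "?A \<inter> ?B = {}" "(?A \<union> ?B) \<inter> ?C = {}" "(?A \<union> ?B \<union> ?C) \<inter> ?D = {}"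
    by (auto simp: push_x_def push_y_def push_xy_def dest: top_notin_dominated_triples)
  have finite: "finite ?A" "finite ?B" "finite ?C" "finite ?D"
    using fin by auto
  have "sum g (dominated_triples R (Suc m) h) = sum g (?A \<union> ?B \<union> ?C \<union> ?D)"
    by (simp only: dominated_triples_Suc[OF R])
  also have "\<dots> = sum g ?A + sum g ?B + sum g ?C + sum g ?D"
    using finite disjoint by (simp only: sum.union_disjoint finite_Un)
  also have "sum g ?B
      = (if h = 0 then 0 else \<Sum>r\<in>R. sum (g \<circ> push_x m r) (dominated_triples R m (h - 1)))"
  proof (cases h)
    case (Suc h')
    have "sum g (\<Union>r\<in>R. push_x m r ` dominated_triples R m h')
        = (\<Sum>r\<in>R. sum (g \<circ> push_x m r) (dominated_triples R m h'))"
      using fin by (intro sum_UN_injective_images) (auto simp: push_x_def inj_on_def)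
    then show ?thesis using Suc by simp
  qed simp
  also have "sum g ?C = sum (g \<circ> push_y m) (dominated_triples R m (Suc h))"
    by (rule sum.reindex) (auto simp: push_y_def inj_on_def)
  also have "sum g ?D
      = (\<Sum>r\<in>{r \<in> R. h = 0 \<longrightarrow> r = 0}. sum (g \<circ> push_xy m r) (dominated_triples R m h))"
    using fin by (intro sum_UN_injective_images) (auto simp: push_xy_def inj_on_def)
  finally show ?thesis .
qed

section \<open>Labels in {0, 1}: the Schroeder generating function\<close>

unbundle fps_syntax

lemma card_dominated_triples_Suc:
  "card (dominated_triples {0, 1} (Suc m) h) =
     card (dominated_triples {0, 1} m h)
     + (if h = 0 then 0 else 2 * card (dominated_triples {0, 1} m (h - 1)))
     + card (dominated_triples {0, 1} m (Suc h))
     + (if h = 0 then 1 else 2) * card (dominated_triples {0, 1} m h)"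
proof -
  have "{r \<in> {0, 1 :: int}. h = 0 \<longrightarrow> r = 0} = (if h = 0 then {0} else {0, 1})"
    by auto
  then show ?thesis
    using sum_dominated_triples_Suc[of "{0, 1}" "\<lambda>_. 1 :: nat" m h] by simp
qed

definition schroeder_fps :: "int fps" where
  "schroeder_fps = Abs_fps (\<lambda>n. int (schroeder n))"

lemma schroeder_fps_eq: "schroeder_fps = 1 + fps_X * (schroeder_fps + schroeder_fps ^ 2)"
proof (rule fps_ext)
  fix n
  show "schroeder_fps $ n = (1 + fps_X * (schroeder_fps + schroeder_fps ^ 2)) $ n"
  proof (cases n)
    case (Suc k)
    have "(schroeder_fps ^ 2) $ k = (\<Sum>i\<le>k. int (schroeder i) * int (schroeder (k - i)))"
      by (simp add: power2_eq_square fps_mult_nth schroeder_fps_def atLeast0AtMost)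
    then show ?thesis using Suc by (simp add: schroeder_fps_def)
  qed (simp add: schroeder_fps_def)
qed

definition schroeder_fps_pow :: "nat \<Rightarrow> int fps" where
  "schroeder_fps_pow h = schroeder_fps * (schroeder_fps - 1) ^ h"

lemma schroeder_fps_pow_rec:
  "schroeder_fps_pow h = (if h = 0 then 1 else 0)
     + fps_X * (fps_const (if h = 0 then 2 else 3) * schroeder_fps_pow h
       + (if h = 0 then 0 else fps_const 2 * schroeder_fps_pow (h - 1))
       + schroeder_fps_pow (Suc h))"
proof -
  define T where "T = schroeder_fps - 1"
  have S: "schroeder_fps = 1 + T" and T: "T = fps_X * (2 + 3 * T + T ^ 2)"
    using schroeder_fps_eq by (simp_all add: T_def algebra_simps power2_eq_square)
  show ?thesis
  proof (cases h)
    case 0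
    have "schroeder_fps_pow 0 = 1 + fps_X * (2 * schroeder_fps_pow 0 + schroeder_fps_pow 1)"
      unfolding schroeder_fps_pow_def S T_def[symmetric]
      by (subst (1) T) (simp add: algebra_simps power2_eq_square)
    then show ?thesis using 0 by (simp add: numeral_fps_const)
  next
    case (Suc h')
    have "schroeder_fps_pow h = (1 + T) * T ^ h' * T"
      by (simp add: schroeder_fps_pow_def Suc S T_def[symmetric] algebra_simps)
    also have "\<dots> = fps_X * (3 * schroeder_fps_pow h + 2 * schroeder_fps_pow h'
        + schroeder_fps_pow (Suc h))"
      by (subst (3) T)
        (simp add: schroeder_fps_pow_def Suc S T_def[symmetric] algebra_simps power2_eq_square)
    finally show ?thesis using Suc by (simp add: numeral_fps_const)
  qed
qed

lemma card_dominated_triples_eq_schroeder_fps_pow_nth: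
  "int (card (dominated_triples {0, 1} m h)) = schroeder_fps_pow h $ m"
proof (induction m arbitrary: h)
  case 0
  show ?case
    by (simp add: dominated_triples_0 schroeder_fps_pow_def fps_power_zeroth schroeder_fps_def)
next
  case (Suc m)
  show ?case
    by (subst schroeder_fps_pow_rec)
      (simp add: card_dominated_triples_Suc Suc.IH fps_mult_left_const_nth algebra_simps)
qed

lemma schroeder_eq_card_dominated_triples: "schroeder m = card (dominated_triples {0, 1} m 0)"
  using card_dominated_triples_eq_schroeder_fps_pow_nth[of m 0]
  by (simp add: schroeder_fps_pow_def schroeder_fps_def)

section \<open>Zero labels: a binomial determinant\<close>

(* Extending the binomial coefficient by 0 to negative lower indices lets binomial_det satisfy
   the recursion binomial_det_Suc without case distinctions. *)
definition choose_int :: "nat \<Rightarrow> int \<Rightarrow> int" where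
  "choose_int m k = (if k < 0 then 0 else int (m choose nat k))"

lemma choose_int_Suc: "choose_int (Suc m) k = choose_int m k + choose_int m (k - 1)"
proof (cases "k \<le> 0")
  case False
  then have "nat k = Suc (nat (k - 1))" by simp
  then show ?thesis using False by (simp add: choose_int_def)
qed (auto simp: choose_int_def)

definition binomial_det :: "nat \<Rightarrow> int \<Rightarrow> int \<Rightarrow> int" where
  "binomial_det m h s =
     choose_int m (s + h) * choose_int m s - choose_int m (s + h + 1) * choose_int m (s - 1)"

lemma binomial_det_Suc:
  "binomial_det (Suc m) h s =
     binomial_det m h s + binomial_det m (h - 1) s
     + binomial_det m (h + 1) (s - 1) + binomial_det m h (s - 1)"
  unfolding binomial_det_def choose_int_Suc by (simp add: algebra_simps)

lemma binomial_det_neg: "binomial_det m (- 1) s = 0" "binomial_det m h (- 1) = 0"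
  by (simp_all add: binomial_det_def choose_int_def)

lemma card_dominated_triples_length_eq_binomial_det:
  "int (card {p \<in> dominated_triples {0} m h. length (fst (snd p)) = s})
     = binomial_det m (int h) (int s)"
proof (induction m arbitrary: h s)
  case 0
  show ?case
    by (cases s) (auto simp: dominated_triples_0 binomial_det_def choose_int_def Collect_conv_if
        nat_add_distrib)
next
  case (Suc m)
  define g where "g s p = (if length (fst (snd p)) = s then 1 else 0 :: int)"
    for s and p :: seq_triple
  define count where "count h s = sum (g s) (dominated_triples {0} m h)" for h s
  have count: "count h s = binomial_det m (int h) (int s)" for h s
    using Suc.IH[of h s]
    by (simp add: count_def g_def int_card_filter_eq_sum finite_dominated_triples)
  have push_x: "(\<Sum>p\<in>dominated_triples {0} m k. g s (push_x m 0 p)) = count k s" for k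
    by (simp add: count_def g_def push_x_def case_prod_unfold)
  have push_y: "(\<Sum>p\<in>dominated_triples {0} m k. g s (push_y m p))
      = (if s = 0 then 0 else count k (s - 1))" for k
    by (cases s) (simp_all add: count_def g_def push_y_def case_prod_unfold)
  have push_xy: "(\<Sum>p\<in>dominated_triples {0} m k. g s (push_xy m 0 p))
      = (if s = 0 then 0 else count k (s - 1))" for k
    by (cases s) (simp_all add: count_def g_def push_xy_def case_prod_unfold)
  have labels: "{0 :: int} \<subseteq> {0, 1}" "{r \<in> {0 :: int}. h = 0 \<longrightarrow> r = 0} = {0}"
    by auto
  have "int (card {p \<in> dominated_triples {0} (Suc m) h. length (fst (snd p)) = s})
      = sum (g s) (dominated_triples {0} (Suc m) h)"
    by (simp add: g_def int_card_filter_eq_sum finite_dominated_triples)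
  also have "\<dots> = count h s + (if h = 0 then 0 else count (h - 1) s)
        + (if s = 0 then 0 else count (Suc h) (s - 1)) + (if s = 0 then 0 else count h (s - 1))"
    unfolding sum_dominated_triples_Suc[OF labels(1)] labels(2)
    by (simp add: push_x push_y push_xy count_def)
  also have "\<dots> = binomial_det (Suc m) (int h) (int s)"
    unfolding binomial_det_Suc count
    by (cases h; cases s) (auto simp: binomial_det_neg of_nat_diff algebra_simps)
  finally show ?case .
qed

lemma narayana_eq_binomial_det:
  "real (Suc m choose s) * real (Suc m choose Suc s)
     = real (Suc m) * real_of_int (binomial_det m 0 (int s))"
proof (cases s)
  case (Suc t)
  have "binomial_det m 0 (int s)
      = int (m choose Suc t) ^ 2 - int (m choose Suc (Suc t)) * int (m choose t)"
    by (simp add: Suc binomial_det_def choose_int_def power2_eq_square nat_add_distrib)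
  then show ?thesis
    using narayana_identity[of m t] by (simp add: Suc)
qed (simp add: binomial_det_def choose_int_def)

section \<open>The triples and pairs of the statement\<close>

lemma mem_dominated_triples_0_iff_nth:
  "(xs, ys, rs) \<in> dominated_triples R m 0 \<longleftrightarrow>
     length ys = length xs \<and> length rs = length xs \<and>
     (\<forall>k. Suc k < length xs \<longrightarrow> xs ! Suc k < xs ! k \<and> ys ! Suc k < ys ! k) \<and>
     (\<forall>k < length xs. 0 \<le> xs ! k \<and> xs ! k < int m \<and> 0 \<le> ys ! k \<and> ys ! k < int m \<and>
        rs ! k \<in> R \<and> xs ! k + rs ! k \<le> ys ! k)"
  unfolding dominated_triples_def sorted_wrt_iff_nth_Suc_transp[OF transp_on_greater]
  by (auto simp: list_all2_conv_all_nth subset_eq all_set_conv_all_nth)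

definition shift_triple :: "nat \<Rightarrow> seq_triple \<Rightarrow> seq_triple" where
  "shift_triple m =
     (\<lambda>(xs, ys, rs). (map2 (\<lambda>x r. x + 1 + r) xs rs, map2 (\<lambda>y r. int m - y + r) ys rs, rs))"

definition unshift_triple :: "nat \<Rightarrow> seq_triple \<Rightarrow> seq_triple" where
  "unshift_triple m =
     (\<lambda>(is, js, rs). (map2 (\<lambda>i r. i - 1 - r) is rs, map2 (\<lambda>j r. int m - j + r) js rs, rs))"

lemma shift_triple_mem:
  assumes R: "R \<subseteq> {0, 1}" and p: "(xs, ys, rs) \<in> dominated_triples R m 0"
  shows "schroeder_triple (Suc m)
    (map2 (\<lambda>x r. x + 1 + r) xs rs) (map2 (\<lambda>y r. int m - y + r) ys rs) rs"
proof -
  have len: "length ys = length xs" "length rs = length xs"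
    using p by (simp_all add: mem_dominated_triples_0_iff_nth)
  have pt: "0 \<le> xs ! k \<and> 0 \<le> ys ! k \<and> ys ! k < int m \<and> rs ! k \<in> {0, 1} \<and>
      0 \<le> rs ! k \<and> rs ! k \<le> 1 \<and> xs ! k + rs ! k \<le> ys ! k" if "k < length xs" for k
    using p R that by (fastforce simp: mem_dominated_triples_0_iff_nth)
  have step: "xs ! Suc k < xs ! k \<and> ys ! Suc k < ys ! k \<and>
      0 \<le> rs ! k \<and> rs ! k \<le> 1 \<and> 0 \<le> rs ! Suc k \<and> rs ! Suc k \<le> 1" if "Suc k < length xs" for k
    using p that pt[of k] pt[of "Suc k"] by (simp add: mem_dominated_triples_0_iff_nth)
  show ?thesis
    unfolding schroeder_triple_def using len
    by (intro conjI allI impI; fastforce dest: pt step)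
qed

lemma unshift_triple_mem:
  assumes R: "set rs \<subseteq> R" and t: "schroeder_triple (Suc m) is js rs"
  shows "(map2 (\<lambda>i r. i - 1 - r) is rs, map2 (\<lambda>j r. int m - j + r) js rs, rs)
    \<in> dominated_triples R m 0"
proof -
  have len: "length js = length is" "length rs = length is"
    using t by (simp_all add: schroeder_triple_def)
  have pt: "rs ! k \<in> R \<and> 0 \<le> rs ! k \<and> rs ! k \<le> 1 \<and> 0 < is ! k - rs ! k \<and> 0 < js ! k - rs ! k \<and>
      is ! k + js ! k \<le> int m + 1 + rs ! k" if "k < length is" for k
    using t R that len by (fastforce simp: schroeder_triple_def)
  have step: "is ! Suc k - rs ! Suc k < is ! k - rs ! k \<and> js ! k - rs ! k < js ! Suc k - rs ! Suc k"
    if "Suc k < length is" for k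
    using t that by (simp add: schroeder_triple_def)
  show ?thesis
    unfolding mem_dominated_triples_0_iff_nth using len
    by (intro conjI allI impI; fastforce dest: pt step)
qed

lemma bij_betw_shift_triple:
  assumes "R \<subseteq> {0, 1}"
  shows "bij_betw (shift_triple m) (dominated_triples R m 0)
    {(is, js, rs). schroeder_triple (Suc m) is js rs \<and> set rs \<subseteq> R}"
proof (rule bij_betw_byWitness[where f' = "unshift_triple m"])
  show "\<forall>p \<in> dominated_triples R m 0. unshift_triple m (shift_triple m p) = p"
    by (auto simp: mem_dominated_triples_0_iff_nth shift_triple_def unshift_triple_def
        intro!: nth_equalityI)
  show "\<forall>t \<in> {(is, js, rs). schroeder_triple (Suc m) is js rs \<and> set rs \<subseteq> R}.
      shift_triple m (unshift_triple m t) = t"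
    by (auto simp: schroeder_triple_def shift_triple_def unshift_triple_def intro!: nth_equalityI)
  show "shift_triple m ` dominated_triples R m 0
      \<subseteq> {(is, js, rs). schroeder_triple (Suc m) is js rs \<and> set rs \<subseteq> R}"
    using shift_triple_mem[OF assms] by (auto simp: shift_triple_def dominated_triples_def)
  show "unshift_triple m ` {(is, js, rs). schroeder_triple (Suc m) is js rs \<and> set rs \<subseteq> R}
      \<subseteq> dominated_triples R m 0"
    using unshift_triple_mem by (auto simp: unshift_triple_def)
qed

lemma catalan_pair_iff_schroeder_triple:
  "catalan_pair n is js \<longleftrightarrow> schroeder_triple n is js (replicate (length is) 0)"
  by (auto simp: catalan_pair_def schroeder_triple_def)

lemma bij_betw_catalan_pair_zero_labels:
  "bij_betw (\<lambda>(is, js). (is, js, replicate (length is) 0)) {(is, js). catalan_pair n is js}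
     {(is, js, rs). schroeder_triple n is js rs \<and> set rs \<subseteq> {0}}"
proof (rule bij_betw_byWitness[where f' = "\<lambda>(is, js, rs). (is, js)"])
  have zero_labels: "rs = replicate (length is) 0"
    if "schroeder_triple n is js rs" "set rs \<subseteq> {0}" for "is" js rs
    using that replicate_length_same[of rs 0] by (auto simp: schroeder_triple_def)
  then show "\<forall>t \<in> {(is, js, rs). schroeder_triple n is js rs \<and> set rs \<subseteq> {0}}.
      (\<lambda>(is, js). (is, js, replicate (length is) 0)) ((\<lambda>(is, js, rs). (is, js)) t) = t"
    by auto
  show "(\<lambda>(is, js, rs). (is, js)) ` {(is, js, rs). schroeder_triple n is js rs \<and> set rs \<subseteq> {0}}
      \<subseteq> {(is, js). catalan_pair n is js}"
    using zero_labels by (auto simp: catalan_pair_iff_schroeder_triple)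
qed (auto simp: catalan_pair_iff_schroeder_triple)

lemma card_catalan_pairs_eq_card_dominated_triples:
  "card {(is, js). catalan_pair (Suc m) is js \<and> P (length is)}
     = card {p \<in> dominated_triples {0} m 0. P (length (fst (snd p)))}"
proof -
  let ?T = "{(is, js, rs). schroeder_triple (Suc m) is js rs \<and> set rs \<subseteq> {0}}"
  have "bij_betw (\<lambda>(is, js). (is, js, replicate (length is) 0))
      {q \<in> {(is, js). catalan_pair (Suc m) is js}. P (length (fst q))} {t \<in> ?T. P (length (fst t))}"
    by (rule bij_betw_Collect[OF bij_betw_catalan_pair_zero_labels]) auto
  moreover have "bij_betw (shift_triple m)
      {p \<in> dominated_triples {0} m 0. P (length (fst (snd p)))} {t \<in> ?T. P (length (fst t))}"
    by (rule bij_betw_Collect[OF bij_betw_shift_triple])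
      (auto simp: shift_triple_def dominated_triples_def)
  ultimately show ?thesis
    by (auto simp: case_prod_unfold dest!: bij_betw_same_card)
qed

lemma schroeder_eq_card_schroeder_triples:
  "schroeder m = card {(is, js, rs). schroeder_triple (Suc m) is js rs}"
proof -
  have "{(is, js, rs). schroeder_triple (Suc m) is js rs}
      = {(is, js, rs). schroeder_triple (Suc m) is js rs \<and> set rs \<subseteq> {0, 1}}"
    by (auto simp: schroeder_triple_def set_conv_nth)
  then show ?thesis
    using schroeder_eq_card_dominated_triples bij_betw_same_card[OF bij_betw_shift_triple]
    by simp
qed

lemma card_catalan_pairs_length:
  "real (card {(is, js). catalan_pair (Suc m) is js \<and> length is = s})
     = real (Suc m choose s) * real (Suc m choose Suc s) / real (Suc m)"
  using card_catalan_pairs_eq_card_dominated_triples[of m "\<lambda>l. l = s"]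
    card_dominated_triples_length_eq_binomial_det[of m 0 s] narayana_eq_binomial_det[of m s]
  by simp

lemma card_catalan_pairs:
  "real (card {(is, js). catalan_pair (Suc m) is js})
     = 1 / (real (Suc m) + 1) * real ((2 * Suc m) choose Suc m)"
proof -
  let ?D = "dominated_triples {0} m 0"
  have "?D = (\<Union>s\<le>m. {p \<in> ?D. length (fst (snd p)) = s})"
    by (auto simp: dominated_triples_def intro: length_le_if_sorted_below)
  then have "card ?D = card (\<Union>s\<le>m. {p \<in> ?D. length (fst (snd p)) = s})"
    by (rule arg_cong)
  also have "\<dots> = (\<Sum>s\<le>m. card {p \<in> ?D. length (fst (snd p)) = s})"
    by (rule card_UN_disjoint) (auto simp: finite_dominated_triples)
  finally have "real (card {(is, js). catalan_pair (Suc m) is js})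
      = (\<Sum>s\<le>m. real (card {(is, js). catalan_pair (Suc m) is js \<and> length is = s}))"
    using card_catalan_pairs_eq_card_dominated_triples[of m "\<lambda>_. True"]
      card_catalan_pairs_eq_card_dominated_triples[of m "\<lambda>l. l = _"]
    by simp
  also have "\<dots> = (\<Sum>s\<le>m. real (Suc m choose s) * real (Suc m choose Suc s)) / real (Suc m)"
    by (simp only: card_catalan_pairs_length sum_divide_distrib)
  also have "\<dots> = real ((2 * Suc m) choose m) / real (Suc m)"
    by (simp only: sum_choose_mult_choose_Suc)
  also have "\<dots> = 1 / (real (Suc m) + 1) * real ((2 * Suc m) choose Suc m)"
    by (rule choose_pred_div_eq_catalan)
  finally show ?thesis .
qed

theorem corollary2p5:
  fixes n :: nat
  assumes "n \<ge> 1"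
  shows "schroeder (n - 1) = card {(is, js, rs). schroeder_triple n is js rs} \<and>
    real (card {(is, js). catalan_pair n is js})
           = 1 / (real n + 1) * real ((2 * n) choose n) \<and>
    (\<forall>s::nat. real (card {(is, js). catalan_pair n is js \<and> length is = s})
           = 1 / real n * real (n choose s) * real (n choose (s + 1)))"
proof -
  obtain m where n: "n = Suc m"
    using assms by (cases n) auto
  show ?thesis
    unfolding n
    using schroeder_eq_card_schroeder_triples card_catalan_pairs card_catalan_pairs_length
    by simp
qed

end
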